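(* Let $\mathbf L$ be a bounded lattice with canonical polarity $(X,\parallel,Y)$ and spaces $\mathfrak X=(X,\mathcal B)$, $\mathfrak Y=(Y,\mathcal C)$, where $\mathcal B=\{X_a:a\in L\}$ and $\mathcal C=\{Y^a:a\in L\}$. Then $\mathcal B$ is exactly the family of subsets of $X$ that are both compact-open in $\mathfrak X$ and Galois stable, and $\mathcal C$ is exactly the family of subsets of $Y$ that are compact-open in $\mathfrak Y$ and Galois co-stable. Moreover $\mathcal B$ and $\mathcal C$ are dually isomorphic bounded lattices (via $A\mapsto A'$, with $(X_a)'=Y^a$), $\mathcal B$ a sublattice of $\mathcal G(X)$ and $\mathcal C$ a sublattice of $\mathcal G(Y)$.
   Context: Canonical polarity of a bounded lattice $\mathbf L$: $X$ is the set of proper filters of $\mathbf L$, $Y$ the set of proper ideals, and $x\parallel y$ iff $x\cap y\neq\emptyset$. For $a\in L$: $X_a=\{x\in X:a\in x\}$, $Y^a=\{y\in Y:a\in y\}$. $\mathfrak X$ (resp. $\mathfrak Y$) is $X$ (resp. $Y$) with the topology generated by the basis $\mathcal B$ (resp. $\mathcal C$). For $U\subseteq X$, $U'=\{y\in Y:\forall x\in U\;x\parallel y\}$; for $V\subseteq Y$, $V'=\{x\in X:\forall y\in V\;x\parallel y\}$. Stable sets $A=A''\subseteq X$ form the complete lattice $\mathcal G(X)$ (meets = intersections, joins $(\bigcup A_j)''$); co-stable sets $B=B''\subseteq Y$ form $\mathcal G(Y)$. *)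

theory Defs
  imports "HOL-Analysis.Analysis"
begin

definition lat_filter :: "'a::bounded_lattice set \<Rightarrow> bool" where
  "lat_filter F \<longleftrightarrow> F \<noteq> {} \<and> (\<forall>a\<in>F. \<forall>b. a \<le> b \<longrightarrow> b \<in> F) \<and> (\<forall>a\<in>F. \<forall>b\<in>F. inf a b \<in> F)"

definition lat_ideal :: "'a::bounded_lattice set \<Rightarrow> bool" where
  "lat_ideal I \<longleftrightarrow> I \<noteq> {} \<and> (\<forall>a\<in>I. \<forall>b. b \<le> a \<longrightarrow> b \<in> I) \<and> (\<forall>a\<in>I. \<forall>b\<in>I. sup a b \<in> I)"

text \<open>X: proper filters; Y: proper ideals.\<close>
definition PFilt :: "'a::bounded_lattice set set" where
  "PFilt = {F. lat_filter F \<and> F \<noteq> UNIV}"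

definition PIdl :: "'a::bounded_lattice set set" where
  "PIdl = {I. lat_ideal I \<and> I \<noteq> UNIV}"

definition rel :: "'a set \<Rightarrow> 'a set \<Rightarrow> bool" where
  "rel x y \<longleftrightarrow> x \<inter> y \<noteq> {}"

definition Xa :: "'a::bounded_lattice \<Rightarrow> 'a set set" where
  "Xa a = {x \<in> PFilt. a \<in> x}"

definition Ya :: "'a::bounded_lattice \<Rightarrow> 'a set set" where
  "Ya a = {y \<in> PIdl. a \<in> y}"

definition primeX :: "'a::bounded_lattice set set \<Rightarrow> 'a set set" where
  "primeX U = {y \<in> PIdl. \<forall>x\<in>U. rel x y}"

definition primeY :: "'a::bounded_lattice set set \<Rightarrow> 'a set set" where
  "primeY V = {x \<in> PFilt. \<forall>y\<in>V. rel x y}"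

definition BX :: "'a::bounded_lattice set set set" where
  "BX = range Xa"

definition CY :: "'a::bounded_lattice set set set" where
  "CY = range Ya"

definition TopX :: "'a::bounded_lattice set topology" where
  "TopX = topology_generated_by BX"

definition TopY :: "'a::bounded_lattice set topology" where
  "TopY = topology_generated_by CY"

definition stableX :: "'a::bounded_lattice set set \<Rightarrow> bool" where
  "stableX A \<longleftrightarrow> A \<subseteq> PFilt \<and> primeY (primeX A) = A"

definition costableY :: "'a::bounded_lattice set set \<Rightarrow> bool" where
  "costableY B \<longleftrightarrow> B \<subseteq> PIdl \<and> primeX (primeY B) = B"

end

theory Submission
  imports Defs
begin

text \<open>
  The basic opens are closed under binary intersection (\<open>X\<^sub>a \<inter> X\<^sub>b = X\<^sub>a\<^sub>\<sqinter>\<^sub>b\<close>), so a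
  compact-open set is a finite union of basic opens \<open>X\<^sub>a\<^sub>1, \<dots>, X\<^sub>a\<^sub>n\<close>. Its prime is
  \<open>\<Inter>\<^sub>i Y\<^sup>a\<^sup>i = Y\<^sup>c\<close> with \<open>c = a\<^sub>1 \<squnion> \<dots> \<squnion> a\<^sub>n\<close>, whose prime in turn is \<open>X\<^sub>c\<close>; hence a
  stable compact-open set is basic. Conversely \<open>X\<^sub>a\<close> is compact because the principal
  filter \<open>{a..}\<close> is a generic point of it: every open set containing \<open>{a..}\<close> contains
  a basic open \<open>X\<^sub>c\<close> with \<open>a \<le> c\<close>, hence all of \<open>X\<^sub>a\<close>.
\<close>

lemma generate_topology_on_basis_nbhd:
  assumes Int_closed: "\<And>b1 b2. b1 \<in> \<B> \<Longrightarrow> b2 \<in> \<B> \<Longrightarrow> b1 \<inter> b2 \<in> \<B>"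
    and "generate_topology_on \<B> U" "x \<in> U"
  shows "\<exists>b\<in>\<B>. x \<in> b \<and> b \<subseteq> U"
  using assms(2,3)
proof (induction arbitrary: x)
  case Empty
  then show ?case by simp
next
  case (Int U V)
  obtain b1 where "b1 \<in> \<B>" "x \<in> b1" "b1 \<subseteq> U"
    using Int.IH(1) Int.prems by blast
  moreover obtain b2 where "b2 \<in> \<B>" "x \<in> b2" "b2 \<subseteq> V"
    using Int.IH(2) Int.prems by blast
  ultimately show ?case using Int_closed by (intro bexI[of _ "b1 \<inter> b2"]) auto
next
  case (UN K)
  then obtain k where "k \<in> K" "x \<in> k" by blast
  moreover from this obtain b where "b \<in> \<B>" "x \<in> b" "b \<subseteq> k" using UN.IH by meson
  ultimately show ?case by blast
next
  case (Basis s)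
  then show ?case by blast
qed

lemma compact_open_finite_Union_basis:
  assumes Int_closed: "\<And>b1 b2. b1 \<in> \<B> \<Longrightarrow> b2 \<in> \<B> \<Longrightarrow> b1 \<inter> b2 \<in> \<B>"
    and open_U: "openin (topology_generated_by \<B>) U"
    and compact_U: "compactin (topology_generated_by \<B>) U"
  obtains \<F> where "finite \<F>" "\<F> \<subseteq> \<B>" "U = \<Union>\<F>"
proof -
  let ?\<U> = "{b \<in> \<B>. b \<subseteq> U}"
  have "U \<subseteq> \<Union>?\<U>"
    using generate_topology_on_basis_nbhd[OF Int_closed] open_U
    by (fastforce simp: openin_topology_generated_by_iff)
  moreover have "\<forall>b\<in>?\<U>. openin (topology_generated_by \<B>) b"
    by (simp add: topology_generated_by_Basis)
  ultimately obtain \<F> where "finite \<F>" "\<F> \<subseteq> ?\<U>" "U \<subseteq> \<Union>\<F>"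
    using compact_U unfolding compactin_def by meson
  then show thesis by (intro that[of \<F>]) auto
qed

lemma compactin_generic_point:
  assumes "S \<subseteq> topspace T" "p \<in> S" "\<And>U. openin T U \<Longrightarrow> p \<in> U \<Longrightarrow> S \<subseteq> U"
  shows "compactin T S"
  unfolding compactin_def
proof (intro conjI allI impI)
  fix \<U> assume "(\<forall>U\<in>\<U>. openin T U) \<and> S \<subseteq> \<Union>\<U>"
  with assms obtain U where "U \<in> \<U>" "S \<subseteq> U" by blast
  then show "\<exists>\<F>. finite \<F> \<and> \<F> \<subseteq> \<U> \<and> S \<subseteq> \<Union>\<F>" by (intro exI[of _ "{U}"]) auto
qed (use assms in auto)

lemma PFilt_top: "x \<in> PFilt \<Longrightarrow> top \<in> x"
  unfolding PFilt_def lat_filter_def by auto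

lemma PFilt_bot: "x \<in> PFilt \<Longrightarrow> bot \<notin> x"
  unfolding PFilt_def lat_filter_def using bot_least by blast

lemma PFilt_upward: "x \<in> PFilt \<Longrightarrow> a \<in> x \<Longrightarrow> a \<le> b \<Longrightarrow> b \<in> x"
  unfolding PFilt_def lat_filter_def by auto

lemma atLeast_in_PFilt: "a \<noteq> bot \<Longrightarrow> {a..} \<in> PFilt"
  unfolding PFilt_def lat_filter_def using bot_unique[of a] by (auto intro: order_trans)

lemma PIdl_bot: "y \<in> PIdl \<Longrightarrow> bot \<in> y"
  unfolding PIdl_def lat_ideal_def by auto

lemma PIdl_top: "y \<in> PIdl \<Longrightarrow> top \<notin> y"
  unfolding PIdl_def lat_ideal_def using top_greatest by blast

lemma PIdl_downward: "y \<in> PIdl \<Longrightarrow> a \<in> y \<Longrightarrow> b \<le> a \<Longrightarrow> b \<in> y"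
  unfolding PIdl_def lat_ideal_def by auto

lemma atMost_in_PIdl: "a \<noteq> top \<Longrightarrow> {..a} \<in> PIdl"
  unfolding PIdl_def lat_ideal_def using top_unique[of a] by (auto intro: order_trans)

lemma Xa_bot: "Xa bot = {}"
  unfolding Xa_def using PFilt_bot by auto

lemma Xa_top: "Xa top = PFilt"
  unfolding Xa_def using PFilt_top by auto

lemma Xa_inf: "Xa (inf a b) = Xa a \<inter> Xa b"
  unfolding Xa_def PFilt_def lat_filter_def by auto

lemma Xa_mono: "a \<le> b \<Longrightarrow> Xa a \<subseteq> Xa b"
  unfolding Xa_def using PFilt_upward by blast

lemma Ya_top: "Ya top = {}"
  unfolding Ya_def using PIdl_top by auto

lemma Ya_bot: "Ya bot = PIdl"
  unfolding Ya_def using PIdl_bot by auto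

lemma Ya_sup: "Ya (sup a b) = Ya a \<inter> Ya b"
  unfolding Ya_def PIdl_def lat_ideal_def by auto

lemma Ya_antimono: "a \<le> b \<Longrightarrow> Ya b \<subseteq> Ya a"
  unfolding Ya_def using PIdl_downward by blast

lemma primeX_empty: "primeX {} = PIdl"
  unfolding primeX_def by auto

lemma primeY_empty: "primeY {} = PFilt"
  unfolding primeY_def by auto

lemma primeX_Un: "primeX (U \<union> V) = primeX U \<inter> primeX V"
  unfolding primeX_def by auto

lemma primeY_Un: "primeY (U \<union> V) = primeY U \<inter> primeY V"
  unfolding primeY_def by auto

lemma primeX_antimono: "U \<subseteq> V \<Longrightarrow> primeX V \<subseteq> primeX U"
  unfolding primeX_def by auto

lemma primeY_antimono: "U \<subseteq> V \<Longrightarrow> primeY V \<subseteq> primeY U"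
  unfolding primeY_def by auto

text \<open>A proper ideal meets every filter containing \<open>a\<close> iff it meets \<open>{a..}\<close>, i.e. contains \<open>a\<close>.\<close>

lemma primeX_Xa: "primeX (Xa a) = Ya a"
proof (cases "a = bot")
  case True
  then show ?thesis by (simp add: Xa_bot Ya_bot primeX_empty)
next
  case False
  then have principal: "{a..} \<in> Xa a" unfolding Xa_def using atLeast_in_PFilt by auto
  show ?thesis
  proof (intro equalityI subsetI)
    fix y assume "y \<in> primeX (Xa a)"
    then obtain b where "y \<in> PIdl" "a \<le> b" "b \<in> y"
      using principal unfolding primeX_def rel_def by blast
    then show "y \<in> Ya a" unfolding Ya_def using PIdl_downward by blast
  qed (auto simp: primeX_def Ya_def Xa_def rel_def)
qed

lemma primeY_Ya: "primeY (Ya a) = Xa a"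
proof (cases "a = top")
  case True
  then show ?thesis by (simp add: Ya_top Xa_top primeY_empty)
next
  case False
  then have principal: "{..a} \<in> Ya a" unfolding Ya_def using atMost_in_PIdl by auto
  show ?thesis
  proof (intro equalityI subsetI)
    fix x assume "x \<in> primeY (Ya a)"
    then obtain b where "x \<in> PFilt" "b \<le> a" "b \<in> x"
      using principal unfolding primeY_def rel_def by blast
    then show "x \<in> Xa a" unfolding Xa_def using PFilt_upward by blast
  qed (auto simp: primeY_def Ya_def Xa_def rel_def)
qed

lemma stableX_Xa: "stableX (Xa a)"
  unfolding stableX_def by (simp add: primeX_Xa primeY_Ya) (auto simp: Xa_def)

lemma costableY_Ya: "costableY (Ya a)"
  unfolding costableY_def by (simp add: primeX_Xa primeY_Ya) (auto simp: Ya_def)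

lemma primeY_primeX_Xa_Un: "primeY (primeX (Xa a \<union> Xa b)) = Xa (sup a b)"
  by (simp add: primeX_Un primeX_Xa Ya_sup[symmetric] primeY_Ya)

lemma primeX_primeY_Ya_Un: "primeX (primeY (Ya a \<union> Ya b)) = Ya (inf a b)"
  by (simp add: primeY_Un primeY_Ya Xa_inf[symmetric] primeX_Xa)

lemma PFilt_in_BX: "PFilt \<in> BX"
  unfolding BX_def using Xa_top by (metis rangeI)

lemma primeY_primeX_empty_in_BX: "primeY (primeX {}) \<in> BX"
  unfolding BX_def using primeY_Ya[of bot] by (metis primeX_empty Ya_bot rangeI)

lemma PIdl_in_CY: "PIdl \<in> CY"
  unfolding CY_def using Ya_bot by (metis rangeI)

lemma primeX_primeY_empty_in_CY: "primeX (primeY {}) \<in> CY"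
  unfolding CY_def using primeX_Xa[of top] by (metis primeY_empty Xa_top rangeI)

lemma BX_join_closed: "A1 \<in> BX \<Longrightarrow> A2 \<in> BX \<Longrightarrow> primeY (primeX (A1 \<union> A2)) \<in> BX"
  unfolding BX_def by (auto simp: primeY_primeX_Xa_Un)

lemma CY_join_closed: "B1 \<in> CY \<Longrightarrow> B2 \<in> CY \<Longrightarrow> primeX (primeY (B1 \<union> B2)) \<in> CY"
  unfolding CY_def by (auto simp: primeX_primeY_Ya_Un)

lemma primeX_Union_in_CY:
  assumes "finite \<F>" "\<F> \<subseteq> BX"
  shows "primeX (\<Union>\<F>) \<in> CY"
  using assms
proof (induction rule: finite_induct)
  case empty
  show ?case unfolding CY_def by (simp add: primeX_empty Ya_bot[symmetric])
next
  case (insert A \<F>)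
  then obtain a c where "A = Xa a" "primeX (\<Union>\<F>) = Ya c"
    unfolding BX_def CY_def by auto
  then show ?case unfolding CY_def by (simp add: primeX_Un primeX_Xa Ya_sup[symmetric])
qed

lemma primeY_Union_in_BX:
  assumes "finite \<F>" "\<F> \<subseteq> CY"
  shows "primeY (\<Union>\<F>) \<in> BX"
  using assms
proof (induction rule: finite_induct)
  case empty
  show ?case unfolding BX_def by (simp add: primeY_empty Xa_top[symmetric])
next
  case (insert B \<F>)
  then obtain a c where "B = Ya a" "primeY (\<Union>\<F>) = Xa c"
    unfolding BX_def CY_def by auto
  then show ?case unfolding BX_def by (simp add: primeY_Un primeY_Ya Xa_inf[symmetric])
qed

lemma BX_Int_closed: "A1 \<in> BX \<Longrightarrow> A2 \<in> BX \<Longrightarrow> A1 \<inter> A2 \<in> BX"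
  unfolding BX_def by (auto simp: Xa_inf[symmetric])

lemma CY_Int_closed: "B1 \<in> CY \<Longrightarrow> B2 \<in> CY \<Longrightarrow> B1 \<inter> B2 \<in> CY"
  unfolding CY_def by (auto simp: Ya_sup[symmetric])

lemma openin_TopX_Xa: "openin TopX (Xa a)"
  unfolding TopX_def BX_def by (simp add: topology_generated_by_Basis)

lemma openin_TopY_Ya: "openin TopY (Ya a)"
  unfolding TopY_def CY_def by (simp add: topology_generated_by_Basis)

lemma compactin_TopX_Xa: "compactin TopX (Xa a)"
proof (cases "a = bot")
  case True
  then show ?thesis by (simp add: Xa_bot)
next
  case False
  show ?thesis
  proof (rule compactin_generic_point)
    show "Xa a \<subseteq> topspace TopX" unfolding TopX_def BX_def by auto
    show "{a..} \<in> Xa a" unfolding Xa_def using atLeast_in_PFilt[OF False] by auto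
    fix U assume "openin TopX U" "{a..} \<in> U"
    then obtain c where "{a..} \<in> Xa c" "Xa c \<subseteq> U"
      using generate_topology_on_basis_nbhd[of BX, OF BX_Int_closed]
      unfolding TopX_def openin_topology_generated_by_iff BX_def by blast
    then show "Xa a \<subseteq> U" using Xa_mono[of a c] unfolding Xa_def by auto
  qed
qed

lemma compactin_TopY_Ya: "compactin TopY (Ya a)"
proof (cases "a = top")
  case True
  then show ?thesis by (simp add: Ya_top)
next
  case False
  show ?thesis
  proof (rule compactin_generic_point)
    show "Ya a \<subseteq> topspace TopY" unfolding TopY_def CY_def by auto
    show "{..a} \<in> Ya a" unfolding Ya_def using atMost_in_PIdl[OF False] by auto
    fix U assume "openin TopY U" "{..a} \<in> U"
    then obtain c where "{..a} \<in> Ya c" "Ya c \<subseteq> U"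
      using generate_topology_on_basis_nbhd[of CY, OF CY_Int_closed]
      unfolding TopY_def openin_topology_generated_by_iff CY_def by blast
    then show "Ya a \<subseteq> U" using Ya_antimono[of c a] unfolding Ya_def by auto
  qed
qed

lemma BX_eq_compact_open_stable:
  "BX = {A. openin TopX A \<and> compactin TopX A \<and> stableX A}"
proof (intro equalityI subsetI)
  fix A assume "A \<in> BX"
  then show "A \<in> {A. openin TopX A \<and> compactin TopX A \<and> stableX A}"
    unfolding BX_def using openin_TopX_Xa compactin_TopX_Xa stableX_Xa by auto
next
  fix A assume "A \<in> {A. openin TopX A \<and> compactin TopX A \<and> stableX A}"
  then have "openin TopX A" "compactin TopX A" and stable: "primeY (primeX A) = A"
    unfolding stableX_def by auto
  then obtain \<F> where "finite \<F>" "\<F> \<subseteq> BX" "A = \<Union>\<F>"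
    using compact_open_finite_Union_basis[of BX, OF BX_Int_closed] unfolding TopX_def by blast
  then obtain c where "primeX A = Ya c"
    using primeX_Union_in_CY unfolding CY_def by blast
  then show "A \<in> BX" using stable primeY_Ya[of c] unfolding BX_def by auto
qed

lemma CY_eq_compact_open_costable:
  "CY = {B. openin TopY B \<and> compactin TopY B \<and> costableY B}"
proof (intro equalityI subsetI)
  fix B assume "B \<in> CY"
  then show "B \<in> {B. openin TopY B \<and> compactin TopY B \<and> costableY B}"
    unfolding CY_def using openin_TopY_Ya compactin_TopY_Ya costableY_Ya by auto
next
  fix B assume "B \<in> {B. openin TopY B \<and> compactin TopY B \<and> costableY B}"
  then have "openin TopY B" "compactin TopY B" and costable: "primeX (primeY B) = B"
    unfolding costableY_def by auto
  then obtain \<F> where "finite \<F>" "\<F> \<subseteq> CY" "B = \<Union>\<F>"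
    using compact_open_finite_Union_basis[of CY, OF CY_Int_closed] unfolding TopY_def by blast
  then obtain c where "primeY B = Xa c"
    using primeY_Union_in_BX unfolding BX_def by blast
  then show "B \<in> CY" using costable primeX_Xa[of c] unfolding CY_def by auto
qed

lemma bij_betw_primeX_BX_CY: "bij_betw primeX BX CY"
proof (rule bij_betw_byWitness[where f' = primeY])
  show "\<forall>A\<in>BX. primeY (primeX A) = A" "\<forall>B\<in>CY. primeX (primeY B) = B"
    unfolding BX_def CY_def by (auto simp: primeX_Xa primeY_Ya)
  show "primeX ` BX \<subseteq> CY" "primeY ` CY \<subseteq> BX"
    unfolding BX_def CY_def by (auto simp: primeX_Xa primeY_Ya)
qed

lemma primeX_antimono_iff_BX:
  assumes "A1 \<in> BX" "A2 \<in> BX"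
  shows "A1 \<subseteq> A2 \<longleftrightarrow> primeX A2 \<subseteq> primeX A1"
proof
  assume "primeX A2 \<subseteq> primeX A1"
  then have "primeY (primeX A1) \<subseteq> primeY (primeX A2)" by (rule primeY_antimono)
  then show "A1 \<subseteq> A2" using assms stableX_Xa unfolding BX_def stableX_def by auto
qed (rule primeX_antimono)

theorem proposition4p4:
  shows "(BX :: 'a::bounded_lattice set set set) =
           {A. openin TopX A \<and> compactin TopX A \<and> stableX A}
    \<and> (CY :: 'a set set set) =
           {B. openin TopY B \<and> compactin TopY B \<and> costableY B}
    \<and> (\<forall>a::'a. primeX (Xa a) = Ya a)
    \<and> bij_betw primeX (BX :: 'a set set set) CY
    \<and> (\<forall>A1\<in>(BX :: 'a set set set). \<forall>A2\<in>BX.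
           A1 \<subseteq> A2 \<longleftrightarrow> primeX A2 \<subseteq> primeX A1)
    \<and> (PFilt :: 'a set set) \<in> BX \<and> primeY (primeX {}) \<in> (BX :: 'a set set set)
    \<and> (\<forall>A1\<in>(BX :: 'a set set set). \<forall>A2\<in>BX.
              A1 \<inter> A2 \<in> BX \<and> primeY (primeX (A1 \<union> A2)) \<in> BX)
    \<and> (PIdl :: 'a set set) \<in> CY \<and> primeX (primeY {}) \<in> (CY :: 'a set set set)
    \<and> (\<forall>B1\<in>(CY :: 'a set set set). \<forall>B2\<in>CY.
              B1 \<inter> B2 \<in> CY \<and> primeX (primeY (B1 \<union> B2)) \<in> CY)"
proof (intro conjI ballI allI)
  show "BX = {A. openin TopX A \<and> compactin TopX A \<and> stableX A}"
    by (rule BX_eq_compact_open_stable)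
  show "CY = {B. openin TopY B \<and> compactin TopY B \<and> costableY B}"
    by (rule CY_eq_compact_open_costable)
  show "primeX (Xa a) = Ya a" for a :: 'a by (rule primeX_Xa)
  show "bij_betw primeX BX (CY :: 'a set set set)" by (rule bij_betw_primeX_BX_CY)
  show "PFilt \<in> (BX :: 'a set set set)" "primeY (primeX {}) \<in> (BX :: 'a set set set)"
    "PIdl \<in> (CY :: 'a set set set)" "primeX (primeY {}) \<in> (CY :: 'a set set set)"
    by (rule PFilt_in_BX primeY_primeX_empty_in_BX PIdl_in_CY primeX_primeY_empty_in_CY)+
  fix A1 A2 :: "'a set set" assume "A1 \<in> BX" "A2 \<in> BX"
  then show "A1 \<subseteq> A2 \<longleftrightarrow> primeX A2 \<subseteq> primeX A1" "A1 \<inter> A2 \<in> BX"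
    "primeY (primeX (A1 \<union> A2)) \<in> BX"
    by (rule primeX_antimono_iff_BX BX_Int_closed BX_join_closed)+
next
  fix B1 B2 :: "'a set set" assume "B1 \<in> CY" "B2 \<in> CY"
  then show "B1 \<inter> B2 \<in> CY" "primeX (primeY (B1 \<union> B2)) \<in> CY"
    by (rule CY_Int_closed CY_join_closed)+
qed

end
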